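(* For any legal abstract path $\tau$, $w(\tau)=1+O(\tau)+B(\tau)$. In particular, a legal abstract path has weight $1$ if and only if it consists of a single interior abstract edge.
   Context: $\mathbb F=\{0,1\}$, $\mathbb N=\{0,1,2,\dots\}$. Abstract vertex types: $o$ (interior), $u$ (unstable), $s$ (stable). An abstract edge is $\varepsilon=(\mu,(o_1,u_1,s_1),(o_2,u_2,s_2))\in\mathbb F\times\mathbb N^3\times\mathbb N^3$ such that if $\mu=0$ then $s_1=u_2=0$, and if $\mu=1$ then $o_1=o_2=0$ (interior if $\mu=0$, boundary if $\mu=1$). Weight: $w(\varepsilon)=1$ if $\mu=0$, $2-s_1-u_2$ if $\mu=1$. An abstract path $\tau=(T,\tau,\sigma)$: a non-empty finite directed tree $T=(V,E)$ (nodes; arrows, also called breaks), $\tau:V\to$ abstract edges, $\sigma:E\to\{o,u,s\}$, such that for every node $v$ and type $X\in\{o,u,s\}$, $X_1(v)\ge|\{e:t(e)=v,\sigma(e)=X\}|$ and $X_2(v)\ge|\{e:s(e)=v,\sigma(e)=X\}|$, with $X_i(v)$ the entries of $\tau(v)$. Ends: $X_1(\tau)=\sum_vX_1(v)-|\sigma^{-1}(X)|$, $X_2(\tau)=\sum_vX_2(v)-|\sigma^{-1}(X)|$. $\tau$ is legal if $s_1(\tau)=u_2(\tau)=0$. Weight $w(\tau)=\sum_vw(\tau(v))$. $O(\tau)=|\sigma^{-1}(o)|$ is the number of interior breaks and $B(\tau)$ the number of nodes $v$ with $\mu(v)=1$ (boundary edges). *)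

theory Defs
  imports Main
begin

text \<open>Vertex / break types: o (interior), u (unstable), s (stable).\<close>
datatype vtype = Ot | Ut | St

text \<open>An abstract edge (mu, (o1,u1,s1), (o2,u2,s2)) with mu in F = {0,1}.\<close>
type_synonym aedge = "nat \<times> (nat \<times> nat \<times> nat) \<times> (nat \<times> nat \<times> nat)"

fun emu :: "aedge \<Rightarrow> nat" where
  "emu (m, _, _) = m"

fun end1 :: "vtype \<Rightarrow> aedge \<Rightarrow> nat" where
  "end1 Ot (_, (o1, u1, s1), _) = o1"
| "end1 Ut (_, (o1, u1, s1), _) = u1"
| "end1 St (_, (o1, u1, s1), _) = s1"

fun end2 :: "vtype \<Rightarrow> aedge \<Rightarrow> nat" where
  "end2 Ot (_, _, (o2, u2, s2)) = o2"
| "end2 Ut (_, _, (o2, u2, s2)) = u2"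
| "end2 St (_, _, (o2, u2, s2)) = s2"

definition is_abstract_edge :: "aedge \<Rightarrow> bool" where
  "is_abstract_edge \<epsilon> \<longleftrightarrow> emu \<epsilon> \<le> 1
     \<and> (emu \<epsilon> = 0 \<longrightarrow> end1 St \<epsilon> = 0 \<and> end2 Ut \<epsilon> = 0)
     \<and> (emu \<epsilon> = 1 \<longrightarrow> end1 Ot \<epsilon> = 0 \<and> end2 Ot \<epsilon> = 0)"

definition edge_weight :: "aedge \<Rightarrow> int" where
  "edge_weight \<epsilon> = (if emu \<epsilon> = 0 then 1
                      else 2 - int (end1 St \<epsilon>) - int (end2 Ut \<epsilon>))"

text \<open>A finite directed tree: nodes V, arrows E with source src and target tgt.
  It is a tree iff its underlying undirected multigraph is connected and has
  exactly |V| - 1 edges.\<close>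
definition directed_tree :: "'v set \<Rightarrow> 'e set \<Rightarrow> ('e \<Rightarrow> 'v) \<Rightarrow> ('e \<Rightarrow> 'v) \<Rightarrow> bool" where
  "directed_tree V E src tgt \<longleftrightarrow>
     finite V \<and> V \<noteq> {} \<and> finite E
     \<and> (\<forall>e\<in>E. src e \<in> V \<and> tgt e \<in> V)
     \<and> card E + 1 = card V
     \<and> (\<forall>x\<in>V. \<forall>y\<in>V. (x, y) \<in> (\<Union>e\<in>E. {(src e, tgt e), (tgt e, src e)})\<^sup>*)"

definition abstract_path ::
  "'v set \<Rightarrow> 'e set \<Rightarrow> ('e \<Rightarrow> 'v) \<Rightarrow> ('e \<Rightarrow> 'v) \<Rightarrow> ('v \<Rightarrow> aedge) \<Rightarrow> ('e \<Rightarrow> vtype) \<Rightarrow> bool" where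
  "abstract_path V E src tgt \<tau> \<sigma> \<longleftrightarrow>
     directed_tree V E src tgt
     \<and> (\<forall>v\<in>V. is_abstract_edge (\<tau> v))
     \<and> (\<forall>v\<in>V. \<forall>X. end1 X (\<tau> v) \<ge> card {e\<in>E. tgt e = v \<and> \<sigma> e = X}
                 \<and> end2 X (\<tau> v) \<ge> card {e\<in>E. src e = v \<and> \<sigma> e = X})"

definition path_end1 :: "'v set \<Rightarrow> 'e set \<Rightarrow> ('v \<Rightarrow> aedge) \<Rightarrow> ('e \<Rightarrow> vtype) \<Rightarrow> vtype \<Rightarrow> int" where
  "path_end1 V E \<tau> \<sigma> X = (\<Sum>v\<in>V. int (end1 X (\<tau> v))) - int (card {e\<in>E. \<sigma> e = X})"

definition path_end2 :: "'v set \<Rightarrow> 'e set \<Rightarrow> ('v \<Rightarrow> aedge) \<Rightarrow> ('e \<Rightarrow> vtype) \<Rightarrow> vtype \<Rightarrow> int" where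
  "path_end2 V E \<tau> \<sigma> X = (\<Sum>v\<in>V. int (end2 X (\<tau> v))) - int (card {e\<in>E. \<sigma> e = X})"

definition legal_path :: "'v set \<Rightarrow> 'e set \<Rightarrow> ('v \<Rightarrow> aedge) \<Rightarrow> ('e \<Rightarrow> vtype) \<Rightarrow> bool" where
  "legal_path V E \<tau> \<sigma> \<longleftrightarrow> path_end1 V E \<tau> \<sigma> St = 0 \<and> path_end2 V E \<tau> \<sigma> Ut = 0"

definition path_weight :: "'v set \<Rightarrow> ('v \<Rightarrow> aedge) \<Rightarrow> int" where
  "path_weight V \<tau> = (\<Sum>v\<in>V. edge_weight (\<tau> v))"

definition num_interior_breaks :: "'e set \<Rightarrow> ('e \<Rightarrow> vtype) \<Rightarrow> nat" where
  "num_interior_breaks E \<sigma> = card {e\<in>E. \<sigma> e = Ot}"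

definition num_boundary :: "'v set \<Rightarrow> ('v \<Rightarrow> aedge) \<Rightarrow> nat" where
  "num_boundary V \<tau> = card {v\<in>V. emu (\<tau> v) = 1}"

end

theory Submission
  imports Defs
begin

text \<open>Each node contributes \<open>1 + \<mu> - s\<^sub>1 - u\<^sub>2\<close> to the weight, and a tree has one node more
  than it has breaks; every \<open>u\<close>- and \<open>s\<close>-break cancels one \<open>s\<^sub>1\<close>- or \<open>u\<^sub>2\<close>-entry, so
  \<open>w(\<tau>) = 1 + O(\<tau>) + B(\<tau>) - s\<^sub>1(\<tau>) - u\<^sub>2(\<tau>)\<close> for every abstract path.  For weight \<open>1\<close> all
  nodes are interior and all breaks interior; but an interior edge has \<open>s\<^sub>1 = u\<^sub>2 = 0\<close>, so
  it admits no \<open>s\<close>-break ending at it and no \<open>u\<close>-break starting at it, hence there are no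
  breaks at all and the tree is a single node.\<close>

lemma card_split_vtype:
  assumes "finite E"
  shows "card E = card {e\<in>E. \<sigma> e = Ot} + card {e\<in>E. \<sigma> e = Ut} + card {e\<in>E. \<sigma> e = St}"
proof -
  have "E = {e\<in>E. \<sigma> e = Ot} \<union> {e\<in>E. \<sigma> e = Ut} \<union> {e\<in>E. \<sigma> e = St}"
    by (auto intro: vtype.exhaust)
  also have "card \<dots> = card {e\<in>E. \<sigma> e = Ot} + card {e\<in>E. \<sigma> e = Ut} + card {e\<in>E. \<sigma> e = St}"
    using assms by (subst card_Un_disjoint, auto)+
  finally show ?thesis .
qed

lemma edge_weight_eq:
  assumes "is_abstract_edge \<epsilon>"
  shows "edge_weight \<epsilon> = 1 + int (emu \<epsilon>) - int (end1 St \<epsilon>) - int (end2 Ut \<epsilon>)"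
  using assms unfolding is_abstract_edge_def edge_weight_def by auto

lemma sum_emu_eq_num_boundary:
  assumes "finite V" and "\<And>v. v \<in> V \<Longrightarrow> emu (\<tau> v) \<le> 1"
  shows "(\<Sum>v\<in>V. int (emu (\<tau> v))) = int (num_boundary V \<tau>)"
proof -
  have "(\<Sum>v\<in>V. int (emu (\<tau> v))) = (\<Sum>v\<in>V. if emu (\<tau> v) = 1 then 1 else 0)"
    by (rule sum.cong) (use assms(2) in \<open>auto simp: le_Suc_eq\<close>)
  also have "\<dots> = int (card {v\<in>V. emu (\<tau> v) = 1})"
    using assms(1) by (simp add: sum.If_cases Int_def conj_commute)
  finally show ?thesis unfolding num_boundary_def .
qed

lemma path_weight_eq:
  assumes "abstract_path V E src tgt \<tau> \<sigma>"
  shows "path_weight V \<tau> = 1 + int (num_interior_breaks E \<sigma>) + int (num_boundary V \<tau>)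
           - path_end1 V E \<tau> \<sigma> St - path_end2 V E \<tau> \<sigma> Ut"
proof -
  have edges: "\<And>v. v \<in> V \<Longrightarrow> is_abstract_edge (\<tau> v)"
    and tree: "directed_tree V E src tgt"
    using assms unfolding abstract_path_def by auto
  then have "finite V" "finite E" "card E + 1 = card V"
    unfolding directed_tree_def by auto
  have "path_weight V \<tau>
      = (\<Sum>v\<in>V. 1 + int (emu (\<tau> v)) - int (end1 St (\<tau> v)) - int (end2 Ut (\<tau> v)))"
    unfolding path_weight_def by (rule sum.cong) (auto simp: edge_weight_eq edges)
  also have "\<dots> = int (card V) + int (num_boundary V \<tau>)
      - (\<Sum>v\<in>V. int (end1 St (\<tau> v))) - (\<Sum>v\<in>V. int (end2 Ut (\<tau> v)))"
    using edges \<open>finite V\<close>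
    by (simp add: sum.distrib sum_subtractf sum_emu_eq_num_boundary is_abstract_edge_def)
  also have "\<dots> = 1 + int (num_interior_breaks E \<sigma>) + int (num_boundary V \<tau>)
           - path_end1 V E \<tau> \<sigma> St - path_end2 V E \<tau> \<sigma> Ut"
    using card_split_vtype[OF \<open>finite E\<close>, of \<sigma>] \<open>card E + 1 = card V\<close>
    unfolding num_interior_breaks_def path_end1_def path_end2_def by linarith
  finally show ?thesis .
qed

lemma breaks_interior_if_edges_interior:
  assumes "abstract_path V E src tgt \<tau> \<sigma>"
    and interior: "\<And>v. v \<in> V \<Longrightarrow> emu (\<tau> v) = 0"
    and "e \<in> E"
  shows "\<sigma> e = Ot"
proof -
  have tree: "directed_tree V E src tgt"
    and edges: "\<And>v. v \<in> V \<Longrightarrow> is_abstract_edge (\<tau> v)"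
    and bound: "\<And>v X. v \<in> V \<Longrightarrow> card {e\<in>E. tgt e = v \<and> \<sigma> e = X} \<le> end1 X (\<tau> v)
                           \<and> card {e\<in>E. src e = v \<and> \<sigma> e = X} \<le> end2 X (\<tau> v)"
    using assms(1) unfolding abstract_path_def by auto
  then have "finite E" "src e \<in> V" "tgt e \<in> V"
    using \<open>e \<in> E\<close> unfolding directed_tree_def by auto
  have no_end: "end1 St (\<tau> v) = 0 \<and> end2 Ut (\<tau> v) = 0" if "v \<in> V" for v
    using edges[OF that] interior[OF that] unfolding is_abstract_edge_def by auto
  show ?thesis
  proof (cases "\<sigma> e")
    case Ut
    then have "e \<in> {e'\<in>E. src e' = src e \<and> \<sigma> e' = Ut}" using \<open>e \<in> E\<close> by auto
    with \<open>finite E\<close> bound[OF \<open>src e \<in> V\<close>, of Ut] no_end[OF \<open>src e \<in> V\<close>] show ?thesis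
      by (auto simp: card_eq_0_iff)
  next
    case St
    then have "e \<in> {e'\<in>E. tgt e' = tgt e \<and> \<sigma> e' = St}" using \<open>e \<in> E\<close> by auto
    with \<open>finite E\<close> bound[OF \<open>tgt e \<in> V\<close>, of St] no_end[OF \<open>tgt e \<in> V\<close>] show ?thesis
      by (auto simp: card_eq_0_iff)
  qed
qed

lemma single_interior_edge_if_no_breaks_or_boundary:
  assumes path: "abstract_path V E src tgt \<tau> \<sigma>"
    and "num_interior_breaks E \<sigma> = 0" and "num_boundary V \<tau> = 0"
  shows "\<exists>v. V = {v} \<and> E = {} \<and> emu (\<tau> v) = 0"
proof -
  have tree: "directed_tree V E src tgt"
    and edges: "\<And>v. v \<in> V \<Longrightarrow> is_abstract_edge (\<tau> v)"
    using path unfolding abstract_path_def by auto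
  then have "finite V" "finite E" "card E + 1 = card V"
    unfolding directed_tree_def by auto
  have interior: "emu (\<tau> v) = 0" if "v \<in> V" for v
    using \<open>num_boundary V \<tau> = 0\<close> \<open>finite V\<close> edges[OF that] that
    unfolding num_boundary_def is_abstract_edge_def by (auto simp: le_Suc_eq)
  have "E = {}"
    using breaks_interior_if_edges_interior[OF path interior]
      \<open>num_interior_breaks E \<sigma> = 0\<close> \<open>finite E\<close>
    unfolding num_interior_breaks_def by (auto simp: card_eq_0_iff)
  with \<open>card E + 1 = card V\<close> have "card V = 1" by simp
  then obtain v where "V = {v}" by (rule card_1_singletonE)
  with \<open>E = {}\<close> interior show ?thesis by auto
qed

theorem proposition3p10:
  fixes V :: "'v set" and E :: "'e set" and src tgt :: "'e \<Rightarrow> 'v"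
    and \<tau> :: "'v \<Rightarrow> aedge" and \<sigma> :: "'e \<Rightarrow> vtype"
  assumes "abstract_path V E src tgt \<tau> \<sigma>"
    and "legal_path V E \<tau> \<sigma>"
  shows "path_weight V \<tau> = 1 + int (num_interior_breaks E \<sigma>) + int (num_boundary V \<tau>)
    \<and> (path_weight V \<tau> = 1 \<longleftrightarrow> (\<exists>v. V = {v} \<and> E = {} \<and> emu (\<tau> v) = 0))"
proof -
  have weight: "path_weight V \<tau> = 1 + int (num_interior_breaks E \<sigma>) + int (num_boundary V \<tau>)"
    using path_weight_eq[OF assms(1)] assms(2) unfolding legal_path_def by simp
  moreover have "path_weight V \<tau> = 1 \<longleftrightarrow> (\<exists>v. V = {v} \<and> E = {} \<and> emu (\<tau> v) = 0)"
  proof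
    assume "path_weight V \<tau> = 1"
    with weight show "\<exists>v. V = {v} \<and> E = {} \<and> emu (\<tau> v) = 0"
      by (intro single_interior_edge_if_no_breaks_or_boundary[OF assms(1)]) auto
  next
    assume "\<exists>v. V = {v} \<and> E = {} \<and> emu (\<tau> v) = 0"
    with weight show "path_weight V \<tau> = 1"
      unfolding num_interior_breaks_def num_boundary_def by auto
  qed
  ultimately show ?thesis by blast
qed

end
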